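(* Let $G=(V,E)$ be a 3-vertex-connected graph with minimum degree $\delta$. Then Broadcast on $G$ is not solvable with $k\le \delta-2$ ignorant agents (the adversary has a winning strategy).
   Context: A graph is 3-vertex-connected if it has more than 3 vertices and remains connected after deleting any 2 vertices. Broadcast model: a connected base graph $G=(V,E)$ with $n$ nodes. There is one source agent holding a message $\mathcal M$ and $k\ge1$ ignorant agents (agents not holding $\mathcal M$); initially all agents occupy pairwise distinct nodes, the initial placement being chosen by the adversary. Time proceeds in synchronous rounds; in each round: (1) the adversary removes a (possibly empty) set $E'\subseteq E$ of edges such that $(V,E\setminus E')$ is connected; (2) each agent (agents have unique IDs, local memory, and see the entire current graph, the positions of all agents and which agents hold $\mathcal M$) chooses either to stay or to traverse an edge of $E\setminus E'$ incident to its current node; (3) agents move. Whenever an ignorant agent is at the same node as an agent holding $\mathcal M$, it receives $\mathcal M$ and becomes a source agent. The adversary is adaptive and knows the agents' strategy. Broadcast is solvable on $G$ with $k$ ignorant agents if the agents have a strategy such that, for every initial placement and every adversary behaviour, after finitely many rounds all agents hold $\mathcal M$; otherwise the adversary is said to have a winning strategy. *)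

theory Defs
  imports Main
begin

definition simple_graph :: "'v set \<Rightarrow> 'v set set \<Rightarrow> bool" where
  "simple_graph V E \<longleftrightarrow> (\<forall>e\<in>E. \<exists>u v. e = {u, v} \<and> u \<noteq> v \<and> u \<in> V \<and> v \<in> V)"

definition adj_rel :: "'v set set \<Rightarrow> ('v \<times> 'v) set" where
  "adj_rel E = {(u, v). {u, v} \<in> E}"

definition graph_connected :: "'v set \<Rightarrow> 'v set set \<Rightarrow> bool" where
  "graph_connected V E \<longleftrightarrow> (\<forall>u\<in>V. \<forall>v\<in>V. (u, v) \<in> (adj_rel E)\<^sup>*)"

definition delete_vertices :: "'v set \<Rightarrow> 'v set set \<Rightarrow> 'v set \<Rightarrow> 'v set set" where
  "delete_vertices V E S = {e \<in> E. e \<inter> S = {}}"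

definition three_vertex_connected :: "'v set \<Rightarrow> 'v set set \<Rightarrow> bool" where
  "three_vertex_connected V E \<longleftrightarrow> card V > 3 \<and>
     (\<forall>S. S \<subseteq> V \<and> card S = 2 \<longrightarrow> graph_connected (V - S) (delete_vertices V E S))"

definition degree :: "'v set set \<Rightarrow> 'v \<Rightarrow> nat" where
  "degree E v = card {u. {u, v} \<in> E}"

definition min_degree :: "'v set \<Rightarrow> 'v set set \<Rightarrow> nat" where
  "min_degree V E = Min (degree E ` V)"

(* Agents are 0..k; agent 0 is the source, agents 1..k are ignorant.
   A configuration: positions of agents and which agents hold the message.
   Observation history: for every round j = 0..t, the current graph edges (E - E'_j)
   and the configuration at the start of round j.
   A (deterministic, joint) agent strategy maps the observation history to the node
   each agent wants to go to; a request that is neither staying nor traversing a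
   present incident edge is treated as staying. *)
type_synonym 'v config = "(nat \<Rightarrow> 'v) \<times> (nat \<Rightarrow> bool)"
type_synonym 'v history = "('v set set \<times> 'v config) list"
type_synonym 'v strategy = "'v history \<Rightarrow> nat \<Rightarrow> 'v"

definition step_config :: "nat \<Rightarrow> 'v set set \<Rightarrow> 'v config \<Rightarrow> (nat \<Rightarrow> 'v) \<Rightarrow> 'v config" where
  "step_config k Gt c tgt =
     (let p = fst c; inf = snd c;
          p' = (\<lambda>a. if tgt a = p a \<or> {p a, tgt a} \<in> Gt then tgt a else p a);
          inf' = (\<lambda>a. inf a \<or> (\<exists>b\<le>k. inf b \<and> p' b = p' a))
      in (p', inf'))"

primrec run_hist :: "nat \<Rightarrow> 'v strategy \<Rightarrow> (nat \<Rightarrow> 'v set set) \<Rightarrow> 'v set set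
                     \<Rightarrow> (nat \<Rightarrow> 'v) \<Rightarrow> nat \<Rightarrow> 'v history" where
  "run_hist k \<sigma> R E p0 0 = [(E - R 0, (p0, \<lambda>a. a = 0))]"
| "run_hist k \<sigma> R E p0 (Suc t) =
     (let h = run_hist k \<sigma> R E p0 t
      in h @ [(E - R (Suc t), step_config k (fst (last h)) (snd (last h)) (\<sigma> h))])"

definition run_config :: "nat \<Rightarrow> 'v strategy \<Rightarrow> (nat \<Rightarrow> 'v set set) \<Rightarrow> 'v set set
                     \<Rightarrow> (nat \<Rightarrow> 'v) \<Rightarrow> nat \<Rightarrow> 'v config" where
  "run_config k \<sigma> R E p0 t = snd (last (run_hist k \<sigma> R E p0 t))"

definition valid_placement :: "'v set \<Rightarrow> nat \<Rightarrow> (nat \<Rightarrow> 'v) \<Rightarrow> bool" where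
  "valid_placement V k p0 \<longleftrightarrow> inj_on p0 {0..k} \<and> p0 ` {0..k} \<subseteq> V"

definition valid_adversary :: "'v set \<Rightarrow> 'v set set \<Rightarrow> (nat \<Rightarrow> 'v set set) \<Rightarrow> bool" where
  "valid_adversary V E R \<longleftrightarrow> (\<forall>t. R t \<subseteq> E \<and> graph_connected V (E - R t))"

definition broadcast_solvable :: "'v set \<Rightarrow> 'v set set \<Rightarrow> nat \<Rightarrow> bool" where
  "broadcast_solvable V E k \<longleftrightarrow>
     (\<exists>\<sigma>. \<forall>p0 R. valid_placement V k p0 \<longrightarrow> valid_adversary V E R \<longrightarrow>
        (\<exists>t. \<forall>a\<le>k. snd (run_config k \<sigma> R E p0 t) a))"

end

theory Submission
  imports Defs
begin

text \<open>The adversary keeps the source agent trapped. If the source sits at s, it picks a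
neighbour w of s not occupied by an ignorant agent (possible since deg s \<ge> k + 2), and
removes every edge at s except {s, w} and every edge joining w to an occupied node. Then
the source can only stay or move to w, while no ignorant agent can reach s or w, so no
agent ever meets the source. The remaining graph is connected: G - {s, w} is connected by
3-connectivity, and w keeps an edge to some unoccupied node u \<noteq> s since deg w \<ge> k + 2.\<close>

lemma simple_graph_edgeD:
  "simple_graph V E \<Longrightarrow> {a, b} \<in> E \<Longrightarrow> a \<in> V \<and> b \<in> V \<and> a \<noteq> b"
  unfolding simple_graph_def by (auto simp: doubleton_eq_iff)

lemma min_degree_le_degree: "finite V \<Longrightarrow> v \<in> V \<Longrightarrow> min_degree V E \<le> degree E v"
  unfolding min_degree_def by (intro Min_le) auto

lemma min_degree_le_card:
  assumes "finite V" "simple_graph V E" "v \<in> V"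
  shows "min_degree V E \<le> card V"
proof -
  have "degree E v \<le> card V"
    unfolding degree_def using assms(1) simple_graph_edgeD[OF assms(2)]
    by (intro card_mono) (auto simp: insert_commute)
  thus ?thesis using min_degree_le_degree[OF assms(1,3), of E] by linarith
qed

lemma exists_neighbour_outside:
  assumes "finite V" "v \<in> V" "finite B" "card B < min_degree V E"
  shows "\<exists>u. {v, u} \<in> E \<and> u \<notin> B"
proof (rule ccontr)
  assume "\<not> ?thesis"
  hence "{u. {u, v} \<in> E} \<subseteq> B" by (auto simp: insert_commute)
  hence "degree E v \<le> card B" unfolding degree_def using assms(3) by (simp add: card_mono)
  thus False using min_degree_le_degree[OF assms(1,2), of E] assms(4) by simp
qed

lemma adj_rel_rtrancl_sym: "(a, b) \<in> (adj_rel E)\<^sup>* \<Longrightarrow> (b, a) \<in> (adj_rel E)\<^sup>*"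
proof -
  have "sym (adj_rel E)" unfolding adj_rel_def sym_def by (auto simp: insert_commute)
  hence "sym ((adj_rel E)\<^sup>*)" by (rule sym_rtrancl)
  thus "(a, b) \<in> (adj_rel E)\<^sup>* \<Longrightarrow> (b, a) \<in> (adj_rel E)\<^sup>*" by (auto dest: symD)
qed

lemma adj_rel_rtrancl_mono:
  "E1 \<subseteq> E2 \<Longrightarrow> (a, b) \<in> (adj_rel E1)\<^sup>* \<Longrightarrow> (a, b) \<in> (adj_rel E2)\<^sup>*"
proof -
  assume "E1 \<subseteq> E2"
  hence "adj_rel E1 \<subseteq> adj_rel E2" unfolding adj_rel_def by auto
  thus "(a, b) \<in> (adj_rel E1)\<^sup>* \<Longrightarrow> (a, b) \<in> (adj_rel E2)\<^sup>*" using rtrancl_mono by blast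
qed

lemma adj_rel_edge: "{a, b} \<in> E \<Longrightarrow> (a, b) \<in> (adj_rel E)\<^sup>*"
  unfolding adj_rel_def by auto

definition isolating_edges :: "'v set set \<Rightarrow> 'v \<Rightarrow> 'v \<Rightarrow> 'v set \<Rightarrow> 'v set set" where
  "isolating_edges E s w A = {e \<in> E. (s \<in> e \<and> e \<noteq> {s, w}) \<or> (w \<in> e \<and> e \<inter> A \<noteq> {})}"

lemma isolating_edges_connected:
  assumes "simple_graph V E" "three_vertex_connected V E"
    and "{s, w} \<in> E" "s \<notin> A" "w \<notin> A" and "{w, u} \<in> E" "u \<notin> insert s A"
  shows "graph_connected V (E - isolating_edges E s w A)"
proof -
  let ?G = "E - isolating_edges E s w A"
  have sw: "s \<in> V" "w \<in> V" "s \<noteq> w" and uV: "u \<in> V" "u \<noteq> w"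
    using simple_graph_edgeD[OF assms(1)] assms(3,6) by auto
  have ws: "(w, s) \<in> (adj_rel ?G)\<^sup>*"
    using assms(3-5) sw(3) by (intro adj_rel_edge) (auto simp: isolating_edges_def insert_commute)
  have uw: "(u, w) \<in> (adj_rel ?G)\<^sup>*"
    using assms(5-7) uV(2) sw(3) by (intro adj_rel_edge) (auto simp: isolating_edges_def insert_commute)
  have "{s, w} \<subseteq> V" "card {s, w} = 2" using sw by auto
  hence conn: "graph_connected (V - {s, w}) (delete_vertices V E {s, w})"
    using assms(2) unfolding three_vertex_connected_def by blast
  have sub: "delete_vertices V E {s, w} \<subseteq> ?G"
    unfolding delete_vertices_def isolating_edges_def by auto
  have to_s: "(v, s) \<in> (adj_rel ?G)\<^sup>*" if "v \<in> V" for v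
  proof (cases "v \<in> {s, w}")
    case False
    have "u \<in> V - {s, w}" using uV assms(7) by auto
    hence "(v, u) \<in> (adj_rel (delete_vertices V E {s, w}))\<^sup>*"
      using conn that False unfolding graph_connected_def by blast
    hence "(v, u) \<in> (adj_rel ?G)\<^sup>*" by (rule adj_rel_rtrancl_mono[OF sub])
    thus ?thesis using uw ws by (meson rtrancl_trans)
  qed (use ws in auto)
  show ?thesis unfolding graph_connected_def
    using to_s adj_rel_rtrancl_sym by (meson rtrancl_trans)
qed

lemma isolating_edges_at_source:
  "{s, x} \<in> E - isolating_edges E s w A \<Longrightarrow> x = s \<or> x = w"
  unfolding isolating_edges_def by (auto simp: doubleton_eq_iff)

lemma isolating_edges_at_blocked:
  assumes "a \<in> A" "a \<noteq> s" "a \<noteq> w"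
  shows "{a, s} \<notin> E - isolating_edges E s w A" "{a, w} \<notin> E - isolating_edges E s w A"
  using assms unfolding isolating_edges_def by (auto simp: doubleton_eq_iff)

definition occupied :: "nat \<Rightarrow> (nat \<Rightarrow> 'v) \<Rightarrow> 'v set" where
  "occupied k p = p ` {1..k} - {p 0}"

definition exit_neighbour :: "'v set set \<Rightarrow> nat \<Rightarrow> (nat \<Rightarrow> 'v) \<Rightarrow> 'v" where
  "exit_neighbour E k p = (SOME w. {p 0, w} \<in> E \<and> w \<notin> occupied k p)"

definition isolating_adversary :: "'v set \<Rightarrow> 'v set set \<Rightarrow> nat \<Rightarrow> (nat \<Rightarrow> 'v) \<Rightarrow> 'v set set" where
  "isolating_adversary V E k p =
     (if p 0 \<in> V then isolating_edges E (p 0) (exit_neighbour E k p) (occupied k p) else {})"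

lemma isolating_adversary_subset: "isolating_adversary V E k p \<subseteq> E"
  unfolding isolating_adversary_def isolating_edges_def by auto

lemma occupied_card: "finite (occupied k p)" "card (occupied k p) \<le> k"
proof -
  show "finite (occupied k p)" unfolding occupied_def by simp
  have "card (occupied k p) \<le> card (p ` {1..k})" unfolding occupied_def by (intro card_mono) auto
  also have "\<dots> \<le> k" using card_image_le[of "{1..k}" p] by simp
  finally show "card (occupied k p) \<le> k" .
qed

lemma exit_neighbour:
  assumes "finite V" "p 0 \<in> V" "k + 2 \<le> min_degree V E"
  shows "{p 0, exit_neighbour E k p} \<in> E" "exit_neighbour E k p \<notin> occupied k p"
proof -
  have "\<exists>w. {p 0, w} \<in> E \<and> w \<notin> occupied k p"
    using exists_neighbour_outside[OF assms(1,2) occupied_card(1)] occupied_card(2)[of k p] assms(3)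
    by force
  from someI_ex[OF this] show "{p 0, exit_neighbour E k p} \<in> E" "exit_neighbour E k p \<notin> occupied k p"
    unfolding exit_neighbour_def by auto
qed

lemma isolating_adversary_connected:
  assumes "finite V" "simple_graph V E" "graph_connected V E" "three_vertex_connected V E"
    "k + 2 \<le> min_degree V E"
  shows "graph_connected V (E - isolating_adversary V E k p)"
proof (cases "p 0 \<in> V")
  case True
  define w where "w = exit_neighbour E k p"
  have sw: "{p 0, w} \<in> E" "w \<notin> occupied k p"
    using exit_neighbour[where p = p, OF assms(1) True assms(5)] unfolding w_def by auto
  have "card (insert (p 0) (occupied k p)) < min_degree V E"
    using card_insert_le_m1[of k "occupied k p"] occupied_card[of k p] assms(5)
    by (simp add: card_insert_if)
  then obtain u where "{w, u} \<in> E" "u \<notin> insert (p 0) (occupied k p)"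
    using exists_neighbour_outside[OF assms(1)] simple_graph_edgeD[OF assms(2) sw(1)]
      occupied_card(1) by blast
  with sw show ?thesis
    using isolating_edges_connected[OF assms(2,4)] True
    unfolding isolating_adversary_def w_def occupied_def by auto
qed (use assms(3) in \<open>simp add: isolating_adversary_def\<close>)

definition source_isolated :: "'v set \<Rightarrow> nat \<Rightarrow> 'v config \<Rightarrow> bool" where
  "source_isolated V k c \<longleftrightarrow>
     fst c 0 \<in> V \<and> (\<forall>a\<in>{1..k}. fst c a \<noteq> fst c 0) \<and> (\<forall>a\<le>k. snd c a \<longleftrightarrow> a = 0)"

lemma step_config_source_isolated:
  assumes "finite V" "simple_graph V E" "k + 2 \<le> min_degree V E" "source_isolated V k (p, informed)"
  shows "source_isolated V k (step_config k (E - isolating_adversary V E k p) (p, informed) tgt)"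
proof -
  have p0: "p 0 \<in> V" and apart: "\<And>a. a \<in> {1..k} \<Longrightarrow> p a \<noteq> p 0"
    and informed: "\<And>a. a \<le> k \<Longrightarrow> informed a \<longleftrightarrow> a = 0"
    using assms(4) unfolding source_isolated_def by auto
  define w where "w = exit_neighbour E k p"
  let ?G = "E - isolating_edges E (p 0) w (occupied k p)"
  have sw: "{p 0, w} \<in> E" "w \<notin> occupied k p"
    using exit_neighbour[where p = p, OF assms(1) p0 assms(3)] unfolding w_def by auto
  have w: "w \<in> V" "w \<noteq> p 0" using simple_graph_edgeD[OF assms(2) sw(1)] by auto
  define p' where "p' = (\<lambda>a. if tgt a = p a \<or> {p a, tgt a} \<in> ?G then tgt a else p a)"
  have step: "step_config k (E - isolating_adversary V E k p) (p, informed) tgt =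
      (p', \<lambda>a. informed a \<or> (\<exists>b\<le>k. informed b \<and> p' b = p' a))"
    unfolding step_config_def p'_def isolating_adversary_def w_def using p0 by simp
  have source: "p' 0 \<in> {p 0, w}"
    unfolding p'_def using isolating_edges_at_source[of "p 0"] by auto
  have ignorant: "p' a \<notin> {p 0, w}" if "a \<in> {1..k}" for a
  proof -
    have "p a \<in> occupied k p" "p a \<noteq> p 0" "p a \<noteq> w"
      using that apart sw(2) unfolding occupied_def by auto
    thus ?thesis
      unfolding p'_def using isolating_edges_at_blocked[of "p a" _ "p 0" w] by auto
  qed
  have met_source: "a = 0" if "a \<le> k" "p' a = p' 0" for a
    using ignorant[of a] source that by (cases "a = 0") auto
  show ?thesis
    unfolding step source_isolated_def fst_conv snd_conv
    using source w(1) p0 informed met_source by fastforce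
qed

text \<open>The run against the isolating adversary, whose edge removal in each round depends on the
configuration of that same round.\<close>

primrec isolated_hist :: "'v set \<Rightarrow> 'v set set \<Rightarrow> nat \<Rightarrow> 'v strategy \<Rightarrow> (nat \<Rightarrow> 'v)
                          \<Rightarrow> nat \<Rightarrow> 'v history" where
  "isolated_hist V E k \<sigma> p0 0 = [(E - isolating_adversary V E k p0, (p0, \<lambda>a. a = 0))]"
| "isolated_hist V E k \<sigma> p0 (Suc t) =
     (let h = isolated_hist V E k \<sigma> p0 t;
          c' = step_config k (fst (last h)) (snd (last h)) (\<sigma> h)
      in h @ [(E - isolating_adversary V E k (fst c'), c')])"

lemma run_hist_isolated_hist:
  "run_hist k \<sigma> (\<lambda>t. isolating_adversary V E k (fst (snd (last (isolated_hist V E k \<sigma> p0 t)))))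
     E p0 t = isolated_hist V E k \<sigma> p0 t"
  by (induction t) (simp_all add: Let_def)

lemma fst_last_isolated_hist:
  "fst (last (isolated_hist V E k \<sigma> p0 t)) =
     E - isolating_adversary V E k (fst (snd (last (isolated_hist V E k \<sigma> p0 t))))"
  by (cases t) (simp_all add: Let_def)

lemma isolated_hist_source_isolated:
  assumes "finite V" "simple_graph V E" "k + 2 \<le> min_degree V E" "source_isolated V k (p0, \<lambda>a. a = 0)"
  shows "source_isolated V k (snd (last (isolated_hist V E k \<sigma> p0 t)))"
proof (induction t)
  case (Suc t)
  define c where "c = snd (last (isolated_hist V E k \<sigma> p0 t))"
  have "source_isolated V k (fst c, snd c)" using Suc c_def by simp
  from step_config_source_isolated[OF assms(1-3) this] show ?case
    by (simp add: Let_def fst_last_isolated_hist c_def)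
qed (use assms(4) in simp)

lemma exists_valid_placement:
  assumes "finite V" "k + 1 \<le> card V"
  shows "\<exists>p0. valid_placement V k p0"
  using card_le_inj[of "{0..k}" V] assms unfolding valid_placement_def by auto

theorem theorem6:
  fixes V :: "'v set" and E :: "'v set set" and k :: nat
  assumes "finite V"
    and "simple_graph V E"
    and "graph_connected V E"
    and "three_vertex_connected V E"
    and "1 \<le> k"
    and "k + 2 \<le> min_degree V E"
  shows "\<not> broadcast_solvable V E k"
proof
  assume "broadcast_solvable V E k"
  then obtain \<sigma> where \<sigma>: "\<And>p0 R. valid_placement V k p0 \<Longrightarrow> valid_adversary V E R \<Longrightarrow>
      \<exists>t. \<forall>a\<le>k. snd (run_config k \<sigma> R E p0 t) a"
    unfolding broadcast_solvable_def by blast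
  obtain v where v: "v \<in> V" using assms(4) unfolding three_vertex_connected_def by fastforce
  have "k + 1 \<le> card V" using min_degree_le_card[OF assms(1,2) v] assms(6) by linarith
  then obtain p0 where p0: "valid_placement V k p0"
    using exists_valid_placement[OF assms(1)] by blast
  hence start: "source_isolated V k (p0, \<lambda>a. a = 0)"
    unfolding valid_placement_def source_isolated_def inj_on_def by fastforce
  define R where "R = (\<lambda>t. isolating_adversary V E k (fst (snd (last (isolated_hist V E k \<sigma> p0 t)))))"
  have "valid_adversary V E R"
    unfolding valid_adversary_def R_def
    using isolating_adversary_connected[OF assms(1-4,6)] isolating_adversary_subset by blast
  then obtain t where "\<forall>a\<le>k. snd (run_config k \<sigma> R E p0 t) a" using \<sigma> p0 by blast
  moreover have "run_config k \<sigma> R E p0 t = snd (last (isolated_hist V E k \<sigma> p0 t))"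
    unfolding run_config_def R_def run_hist_isolated_hist ..
  ultimately show False
    using isolated_hist_source_isolated[OF assms(1,2,6) start] assms(5)
    unfolding source_isolated_def by auto
qed

end
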